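(* Let $X$ be a convex subset of a real vector space, $(Y,\langle\cdot,\cdot\rangle)$ a real inner product space, $I:X\to\mathbb{R}$ a bounded above convex function and $\Phi:X\to Y$ an affine operator such that $$\inf_{z\in\Phi(X)}\langle z,y\rangle=-\infty$$ for all $y\in\Phi(X)\setminus\{0\}$. Then the set of all global minima of the function $x\mapsto I(x)+\|\Phi(x)\|^2$ on $X$ is contained in $\Phi^{-1}(0)$.
   Context: If $E,F$ are real vector spaces and $D$ is a convex subset of $E$, an operator $\Phi:D\to F$ is called affine if $\Phi(\lambda x+(1-\lambda)y)=\lambda\Phi(x)+(1-\lambda)\Phi(y)$ for all $x,y\in D$ and $\lambda\in[0,1]$. *)

theory Defs
  imports "HOL-Analysis.Analysis"
begin

definition affine_on :: "'a::real_vector set \<Rightarrow> ('a \<Rightarrow> 'b::real_vector) \<Rightarrow> bool" where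
  "affine_on D \<Phi> \<longleftrightarrow> (\<forall>x\<in>D. \<forall>y\<in>D. \<forall>t::real. 0 \<le> t \<and> t \<le> 1 \<longrightarrow>
      \<Phi> (t *\<^sub>R x + (1 - t) *\<^sub>R y) = t *\<^sub>R \<Phi> x + (1 - t) *\<^sub>R \<Phi> y)"

end

theory Submission
  imports Defs
begin

text \<open>At a minimiser x, moving along the segment towards any z \<in> X gives the first-order
  condition \<open>I x - I z \<le> 2 \<langle>\<Phi> z - \<Phi> x, \<Phi> x\<rangle>\<close>. If \<open>\<Phi> x \<noteq> 0\<close>, the bound on I turns this
  into the lower bound \<open>\<langle>\<Phi> z, \<Phi> x\<rangle> \<ge> \<parallel>\<Phi> x\<parallel>\<^sup>2 + (I x - sup I)/2\<close> over \<open>\<Phi>(X)\<close>,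
  contradicting the hypothesis that these inner products are unbounded below.\<close>

lemma nonneg_if_nonneg_plus_small_multiples:
  fixes a b :: real
  assumes "\<And>t. 0 < t \<Longrightarrow> t \<le> 1 \<Longrightarrow> 0 \<le> a + t * b"
  shows "0 \<le> a"
proof (rule tendsto_lowerbound)
  show "((\<lambda>t. a + t * b) \<longlongrightarrow> a) (at_right 0)"
    by (auto intro!: tendsto_eq_intros)
  have "\<forall>\<^sub>F t in at_right (0::real). t \<in> {0<..<1}"
    by (rule eventually_at_right_real) simp
  then show "\<forall>\<^sub>F t in at_right 0. 0 \<le> a + t * b"
    by eventually_elim (use assms in auto)
qed simp

lemma affine_on_segment:
  assumes "affine_on X \<Phi>" "x \<in> X" "z \<in> X" "0 \<le> t" "t \<le> 1"
  shows "\<Phi> ((1 - t) *\<^sub>R x + t *\<^sub>R z) = \<Phi> x + t *\<^sub>R (\<Phi> z - \<Phi> x)"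
proof -
  have "\<Phi> (t *\<^sub>R z + (1 - t) *\<^sub>R x) = t *\<^sub>R \<Phi> z + (1 - t) *\<^sub>R \<Phi> x"
    using assms unfolding affine_on_def by blast
  then show ?thesis
    by (simp add: add.commute algebra_simps)
qed

lemma minimizer_variational_inequality:
  fixes X :: "'a::real_vector set"
    and I :: "'a \<Rightarrow> real"
    and \<Phi> :: "'a \<Rightarrow> 'b::real_inner"
  assumes "convex X" "convex_on X I" "affine_on X \<Phi>"
    and "x \<in> X" "z \<in> X"
    and min: "\<forall>x'\<in>X. I x + (norm (\<Phi> x))\<^sup>2 \<le> I x' + (norm (\<Phi> x'))\<^sup>2"
  shows "I x - I z \<le> 2 * inner (\<Phi> z - \<Phi> x) (\<Phi> x)"
proof -
  define d where "d = \<Phi> z - \<Phi> x"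
  have "0 \<le> (I z - I x + 2 * inner d (\<Phi> x)) + t * inner d d" if t: "0 < t" "t \<le> 1" for t
  proof -
    define xt where "xt = (1 - t) *\<^sub>R x + t *\<^sub>R z"
    have "xt \<in> X"
      using assms(1,4,5) t unfolding xt_def convex_alt by auto
    have I_xt: "I xt \<le> I x + t * (I z - I x)"
      using convex_onD[OF assms(2), of t x z] assms(4,5) t
      by (simp add: xt_def add.commute algebra_simps)
    have "\<Phi> xt = \<Phi> x + t *\<^sub>R d"
      using affine_on_segment[OF assms(3,4,5)] t by (simp add: xt_def d_def)
    then have "(norm (\<Phi> xt))\<^sup>2 = (norm (\<Phi> x))\<^sup>2 + 2 * t * inner d (\<Phi> x) + t\<^sup>2 * inner d d"
      unfolding power2_norm_eq_inner
      by (simp add: inner_add_left inner_add_right inner_commute algebra_simps power2_eq_square)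
    with min \<open>xt \<in> X\<close> I_xt
    have "0 \<le> t * ((I z - I x + 2 * inner d (\<Phi> x)) + t * inner d d)"
      by (force simp: algebra_simps power2_eq_square)
    then show ?thesis
      using t by (simp add: zero_le_mult_iff)
  qed
  then have "0 \<le> I z - I x + 2 * inner d (\<Phi> x)"
    by (rule nonneg_if_nonneg_plus_small_multiples)
  then show ?thesis
    by (simp add: d_def)
qed

theorem theorem1p4:
  fixes X :: "'a::real_vector set"
    and I :: "'a \<Rightarrow> real"
    and \<Phi> :: "'a \<Rightarrow> 'b::real_inner"
  assumes "convex X"
    and "convex_on X I"
    and "bdd_above (I ` X)"
    and "affine_on X \<Phi>"
    and "\<forall>y \<in> \<Phi> ` X - {0}. (INF z\<in>\<Phi> ` X. ereal (inner z y)) = -\<infinity>"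
  shows "{x \<in> X. \<forall>x'\<in>X. I x + (norm (\<Phi> x))\<^sup>2 \<le> I x' + (norm (\<Phi> x'))\<^sup>2}
           \<subseteq> \<Phi> -` {0}"
proof (rule subsetI, rule ccontr)
  fix x
  assume "x \<in> {x \<in> X. \<forall>x'\<in>X. I x + (norm (\<Phi> x))\<^sup>2 \<le> I x' + (norm (\<Phi> x'))\<^sup>2}"
  then have x: "x \<in> X" and min: "\<forall>x'\<in>X. I x + (norm (\<Phi> x))\<^sup>2 \<le> I x' + (norm (\<Phi> x'))\<^sup>2"
    by auto
  assume "x \<notin> \<Phi> -` {0}"
  with x assms(5) have unbounded: "(INF z\<in>\<Phi> ` X. ereal (inner z (\<Phi> x))) = -\<infinity>"
    by auto
  obtain M where M: "\<And>z. z \<in> X \<Longrightarrow> I z \<le> M"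
    using assms(3) by (auto simp: bdd_above_def)
  have "ereal ((I x - M) / 2 + inner (\<Phi> x) (\<Phi> x)) \<le> (INF z\<in>\<Phi> ` X. ereal (inner z (\<Phi> x)))"
  proof (rule INF_greatest, clarify)
    fix z assume "z \<in> X"
    with minimizer_variational_inequality[OF assms(1,2,4) x _ min, of z] M[of z]
    show "ereal ((I x - M) / 2 + inner (\<Phi> x) (\<Phi> x)) \<le> ereal (inner (\<Phi> z) (\<Phi> x))"
      by (simp add: inner_diff_left field_simps)
  qed
  with unbounded show False
    by simp
qed

end
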